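(* Let $M\ge 3$ and, for $s\ge 2$, let $V(s)$ denote the speed, i.e. the almost sure limit $\lim_{t\to\infty}d(o,S_{1,t})/t$, of the $2$-leg spider walk with span bounded by $s$ for the continuous-time simple random walk on the homogeneous tree $\mathbb T_M$. Then $V(s)\to 0$ as $s\to\infty$.
   Context: $\mathbb T_M$ is the infinite tree in which every vertex has degree $M$, with root $o$ and graph distance $d$. The continuous-time simple random walk has rate $1$ to each neighbour. The $2$-leg spider walk with span bounded by $s$ is the continuous-time Markov process $S_t=(S_{1,t},S_{2,t})$ on $\{(x_1,x_2): x_1\ne x_2,\ d(x_1,x_2)\le s\}$ in which each leg jumps to each neighbouring vertex at rate $1$, a jump being performed only if afterwards the two legs are on distinct vertices at distance at most $s$ (otherwise it is suppressed). *)

theory Defs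
  imports "HOL-Probability.Probability"
begin

text \<open>The M-regular tree T_M: vertices are reduced words over the alphabet {0..<M}
  (no two consecutive equal letters), i.e. the Cayley graph of the free product of
  M copies of Z/2. The root o is the empty word.\<close>

definition tree_vertex :: "nat \<Rightarrow> nat list \<Rightarrow> bool" where
  "tree_vertex M w \<longleftrightarrow> set w \<subseteq> {..<M} \<and> (\<forall>i. Suc i < length w \<longrightarrow> w ! i \<noteq> w ! Suc i)"

definition tree_root :: "nat list" where
  "tree_root = []"

definition tree_nbr :: "nat list \<Rightarrow> nat \<Rightarrow> nat list" where
  "tree_nbr x j = (if x = [] then [j] else if j = last x then butlast x else x @ [j])"

fun lcp_len :: "nat list \<Rightarrow> nat list \<Rightarrow> nat" where
  "lcp_len (a # xs) (b # ys) = (if a = b then Suc (lcp_len xs ys) else 0)"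
| "lcp_len _ _ = 0"

definition tree_dist :: "nat list \<Rightarrow> nat list \<Rightarrow> nat" where
  "tree_dist x y = length x + length y - 2 * lcp_len x y"

type_synonym spider_state = "nat list \<times> nat list"

definition spider_move :: "nat \<Rightarrow> nat \<times> nat \<Rightarrow> spider_state \<Rightarrow> spider_state" where
  "spider_move s c st =
     (let (l, j) = c; (x1, x2) = st in
      if l = 0 then (let y = tree_nbr x1 j in
                     if y \<noteq> x2 \<and> tree_dist y x2 \<le> s then (y, x2) else (x1, x2))
      else (let y = tree_nbr x2 j in
                     if x1 \<noteq> y \<and> tree_dist x1 y \<le> s then (x1, y) else (x1, x2)))"

text \<open>Uniformized construction of the continuous-time spider walk: all 2M attempted
  moves (leg, neighbour) occur at rate 1 each, i.e. at total rate 2M an i.i.d. uniform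
  attempt is made.\<close>
definition spider_step_measure :: "nat \<Rightarrow> ((nat \<times> nat) \<times> real) measure" where
  "spider_step_measure M =
     measure_pmf (pmf_of_set ({0, 1} \<times> {..<M}))
       \<Otimes>\<^sub>M density lborel (exponential_density (2 * real M))"

definition spider_space :: "nat \<Rightarrow> ((nat \<times> nat) \<times> real) stream measure" where
  "spider_space M = stream_space (spider_step_measure M)"

primrec spider_chain :: "nat \<Rightarrow> ((nat \<times> nat) \<times> real) stream \<Rightarrow> nat \<Rightarrow> spider_state" where
  "spider_chain s \<omega> 0 = (tree_root, [0])"
| "spider_chain s \<omega> (Suc k) = spider_move s (fst (\<omega> !! k)) (spider_chain s \<omega> k)"

definition spider_njumps :: "((nat \<times> nat) \<times> real) stream \<Rightarrow> real \<Rightarrow> nat" where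
  "spider_njumps \<omega> t = card {k. (\<Sum>i\<le>k. snd (\<omega> !! i)) \<le> t}"

definition spider_pos :: "nat \<Rightarrow> ((nat \<times> nat) \<times> real) stream \<Rightarrow> real \<Rightarrow> spider_state" where
  "spider_pos s \<omega> t = spider_chain s \<omega> (spider_njumps \<omega> t)"

end

theory Submission
  imports Defs
begin

(*
  The speed of the 2-leg spider with span s on the M-regular tree (M >= 3) is at most 4 e M / s;
  in particular it tends to 0 as s grows.

  The proof is a Lyapunov-function argument. For a state (x1, x2) let h be the depth of the
  confluent of the two legs (the length of the longest common prefix of the two reduced words)
  and put
      G_s(x1, x2) = F_s(h) + (|x1| - |x2|)^2,   F_s(h) = h^2/2 (h <= s),  s h - s^2/2 (h >= s).
  (1) Drift: averaged over the 2M equally likely attempted moves, G_s grows by at most 2. The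
      confluent can only move when a leg sits on it, and then the change of F_s is compensated
      by the change of (|x1| - |x2|)^2; this is where M >= 3 and s >= 2 are used.
  (2) Attempts occur at rate 2M. Working on the uniformized construction and inducting over the
      number of attempts with the test function G_s + (4M/theta) exp(theta t), theta = 1/t, gives
      E G_s(S_t) <= 1 + 4 e M t.
  (3) Since the legs are within distance s, |x1| <= h + s <= G_s/s + 3s/2, hence
      E |S_{1,t}| / t <= 4 e M / s + O(1/t), and Fatou's lemma turns the almost sure convergence
      of |S_{1,t}|/t to V(s) into V(s) <= 4 e M / s.
  The walk at time t is identified with the chain truncated after finitely many attempts, so that
  the induction in (2) only involves finitely many coordinates of the driving stream.
*)

section \<open>Common prefixes of words\<close>

lemma lcp_len_sym: "lcp_len x y = lcp_len y x"
  by (induction x y rule: lcp_len.induct) auto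

lemma lcp_len_le: "lcp_len x y \<le> length x" "lcp_len x y \<le> length y"
  by (induction x y rule: lcp_len.induct) auto

lemma lcp_len_prefix: "lcp_len x y = length x \<Longrightarrow> take (length x) y = x"
  by (induction x y rule: lcp_len.induct) (auto split: if_splits)

lemma lcp_len_eq_iff: "x = y \<longleftrightarrow> lcp_len x y = length x \<and> length x = length y"
  by (induction x y rule: lcp_len.induct) auto

lemma lcp_len_single: "lcp_len [j] y = (if y \<noteq> [] \<and> y ! 0 = j then 1 else 0)"
  by (cases y) auto

lemma lcp_len_take: "lcp_len (take n xs) y = min n (lcp_len xs y)"
proof (induction xs arbitrary: y n)
  case (Cons a xs) then show ?case by (cases y; cases n) auto
qed simp

lemma lcp_len_butlast: "x \<noteq> [] \<Longrightarrow> lcp_len (butlast x) y = min (length x - 1) (lcp_len x y)"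
  by (simp add: butlast_conv_take lcp_len_take)

lemma lcp_len_snoc: "lcp_len (x @ [j]) y = (if lcp_len x y < length x then lcp_len x y
   else length x + (if length x < length y \<and> y ! length x = j then 1 else 0))"
proof (induction x arbitrary: y)
  case (Cons a x) then show ?case by (cases y) auto
qed (simp add: lcp_len_single)

lemma tree_vertex_nth: "tree_vertex M w \<Longrightarrow> i < length w \<Longrightarrow> w ! i < M"
  unfolding tree_vertex_def using nth_mem by blast

lemma tree_vertex_reduced: "tree_vertex M w \<Longrightarrow> Suc i < length w \<Longrightarrow> w ! i \<noteq> w ! Suc i"
  unfolding tree_vertex_def by blast

lemma tree_vertex_last: "tree_vertex M w \<Longrightarrow> w \<noteq> [] \<Longrightarrow> last w < M"
  by (simp add: last_conv_nth tree_vertex_nth)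

lemma tree_vertex_nbr:
  assumes x: "tree_vertex M x" and j: "j < M"
  shows "tree_vertex M (tree_nbr x j)"
proof -
  have letters: "set x \<subseteq> {..<M}" and reduced: "\<And>i. Suc i < length x \<Longrightarrow> x ! i \<noteq> x ! Suc i"
    using x unfolding tree_vertex_def by blast+
  consider "x = []" | "x \<noteq> []" "j = last x" | "x \<noteq> []" "j \<noteq> last x" by blast
  then show ?thesis
  proof cases
    case 1 then show ?thesis using j by (auto simp: tree_nbr_def tree_vertex_def)
  next
    case 2
    have "set (butlast x) \<subseteq> {..<M}" using letters by (meson in_set_butlastD subset_iff)
    moreover have "butlast x ! i \<noteq> butlast x ! Suc i" if "Suc i < length (butlast x)" for i
      using that reduced[of i] by (simp add: nth_butlast)
    ultimately show ?thesis using 2 by (simp add: tree_nbr_def tree_vertex_def)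
  next
    case 3
    have "(x @ [j]) ! i \<noteq> (x @ [j]) ! Suc i" if "Suc i < length (x @ [j])" for i
    proof (cases "Suc i < length x")
      case True then show ?thesis using reduced[of i] by (simp add: nth_append)
    next
      case False
      then have "i = length x - 1" using that by simp
      then show ?thesis using 3 False by (auto simp: nth_append last_conv_nth)
    qed
    then show ?thesis using 3 letters j by (simp add: tree_nbr_def tree_vertex_def)
  qed
qed

lemma tree_dist_sym: "tree_dist x y = tree_dist y x"
  by (simp add: tree_dist_def lcp_len_sym)

section \<open>The potential of the confluent\<close>

definition conf_pot :: "nat \<Rightarrow> nat \<Rightarrow> real" where
  "conf_pot s h = (if h \<le> s then real h ^ 2 / 2 else real s * real h - real s ^ 2 / 2)"

lemma conf_pot_below: "h \<le> s \<Longrightarrow> conf_pot s h = real h ^ 2 / 2"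
  by (simp add: conf_pot_def)

lemma conf_pot_above: "s \<le> h \<Longrightarrow> conf_pot s h = real s * real h - real s ^ 2 / 2"
  by (cases "h = s") (auto simp: conf_pot_def power2_eq_square)

lemma conf_pot_increment: shows "0 \<le> conf_pot s (h + 1) - conf_pot s h" "conf_pot s (h + 1) - conf_pot s h \<le> real s"
proof -
  have "conf_pot s (h + 1) - conf_pot s h = (if h + 1 \<le> s then real h + 1/2 else real s)"
    by (auto simp: conf_pot_below conf_pot_above power2_eq_square algebra_simps)
  then show "0 \<le> conf_pot s (h + 1) - conf_pot s h" "conf_pot s (h + 1) - conf_pot s h \<le> real s"
    by auto
qed

lemma conf_pot_convexity_defect:
  assumes "h \<ge> 1" shows "conf_pot s (h + 1) + conf_pot s (h - 1) - 2 * conf_pot s h \<le> 1"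
proof -
  have h1: "real (h - 1) = real h - 1" using assms by simp
  consider "h + 1 \<le> s" | "h = s" | "s + 1 \<le> h" by linarith
  then show ?thesis
    by cases (use h1 in \<open>simp_all add: conf_pot_below conf_pot_above power2_eq_square field_simps\<close>)
qed

lemma conf_pot_mono: "h \<le> k \<Longrightarrow> conf_pot s h \<le> conf_pot s k"
proof (induction k)
  case (Suc k)
  have "conf_pot s k \<le> conf_pot s (k + 1)"
    using conf_pot_increment(1)[of s k] by simp
  then show ?case using Suc by (cases "h = Suc k") auto
qed simp

lemma conf_pot_nonneg: "0 \<le> conf_pot s h"
  using conf_pot_mono[of 0 h s] by (simp add: conf_pot_def)

(* The linear lower bound that converts a bound on F_s into a bound on the depth h. *)
lemma conf_pot_linear_lower: "real s * real h - real s ^ 2 / 2 \<le> conf_pot s h"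
proof (cases "h \<le> s")
  case True
  have "0 \<le> (real h - real s) ^ 2 / 2" by simp
  then show ?thesis using True by (simp add: conf_pot_below power2_eq_square algebra_simps)
qed (simp add: conf_pot_above)

section \<open>The Lyapunov function and admissible states\<close>

definition lyap :: "nat \<Rightarrow> spider_state \<Rightarrow> real" where
  "lyap s st = conf_pot s (lcp_len (fst st) (snd st)) + (real (length (fst st)) - real (length (snd st))) ^ 2"

definition admissible :: "nat \<Rightarrow> nat \<Rightarrow> spider_state \<Rightarrow> bool" where
  "admissible M s st \<longleftrightarrow> tree_vertex M (fst st) \<and> tree_vertex M (snd st) \<and> fst st \<noteq> snd st
     \<and> tree_dist (fst st) (snd st) \<le> s"

lemma lyap_nonneg: "0 \<le> lyap s st"
  by (simp add: lyap_def conf_pot_nonneg)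

lemma start_admissible: "M \<ge> 1 \<Longrightarrow> s \<ge> 1 \<Longrightarrow> admissible M s (tree_root, [0])"
  by (simp add: admissible_def tree_root_def tree_vertex_def tree_dist_def)

lemma start_lyap: "lyap s (tree_root, [0]) = 1"
  by (simp add: lyap_def tree_root_def conf_pot_def)

(* Exchanging the legs is a symmetry; it reduces moves of the second leg to moves of the first. *)
lemma admissible_swap: "admissible M s (x1, x2) \<Longrightarrow> admissible M s (x2, x1)"
  by (auto simp: admissible_def tree_dist_sym)

lemma lyap_swap: "lyap s (prod.swap st) = lyap s st"
  by (cases st) (simp add: lyap_def lcp_len_sym power2_commute)

lemma move_second_swap: "spider_move s (Suc 0, j) (x1, x2) = prod.swap (spider_move s (0, j) (x2, x1))"
  by (simp add: spider_move_def Let_def tree_dist_sym)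

lemma move_admissible:
  assumes "admissible M s st" "snd c < M" shows "admissible M s (spider_move s c st)"
proof -
  obtain x1 x2 l j where st: "st = (x1, x2)" and c: "c = (l, j)" by (cases st, cases c)
  have "tree_vertex M (tree_nbr x1 j)" "tree_vertex M (tree_nbr x2 j)"
    using assms tree_vertex_nbr by (auto simp: st c admissible_def)
  then show ?thesis using assms unfolding st c by (auto simp: spider_move_def Let_def admissible_def)
qed

(* The legs are within distance s of the confluent, so |x1| <= h + s <= G_s/s + 3s/2. *)
lemma first_leg_bound:
  assumes adm: "admissible M s st" and s: "s \<ge> 1"
  shows "real (length (fst st)) \<le> lyap s st / real s + 3 * real s / 2"
proof -
  obtain x1 x2 where st: "st = (x1, x2)" by fastforce
  define h where "h = lcp_len x1 x2"
  have "length x1 + length x2 - 2 * h \<le> s" "h \<le> length x2"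
    using adm lcp_len_le[of x1 x2] by (simp_all add: st admissible_def tree_dist_def h_def)
  then have "length x1 \<le> h + s" by arith
  then have "real s * real (length x1) \<le> real s * (real h + real s)"
    by (intro mult_left_mono) auto
  also have "\<dots> = (real s * real h - real s ^ 2 / 2) + 3 / 2 * real s * real s"
    by (simp add: power2_eq_square algebra_simps)
  also have "\<dots> \<le> lyap s st + 3 / 2 * real s * real s"
    using conf_pot_linear_lower[of s h] by (simp add: st lyap_def h_def add_increasing2)
  finally show ?thesis using s by (simp add: st field_simps)
qed

lemma confluent_letters:
  assumes adm: "admissible M s (x1, x2)" and x1: "x1 \<noteq> []" and conf: "lcp_len x1 x2 = length x1"
  shows "length x1 < length x2" "last x1 < M" "x2 ! length x1 < M" "last x1 \<noteq> x2 ! length x1"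
proof -
  define a where "a = length x1"
  show ab: "length x1 < length x2"
    using adm conf lcp_len_le(2)[of x1 x2] lcp_len_eq_iff[of x1 x2] by (auto simp: admissible_def)
  show "last x1 < M" using adm x1 tree_vertex_last by (auto simp: admissible_def)
  show "x2 ! length x1 < M" using adm ab tree_vertex_nth[of M x2] by (auto simp: admissible_def)
  have "last x1 = x2 ! (a - 1)"
    using x1 lcp_len_prefix[OF conf] by (metis a_def last_conv_nth length_greater_0_conv nth_take diff_less zero_less_one)
  moreover have "x2 ! (a - 1) \<noteq> x2 ! Suc (a - 1)"
    using adm x1 ab tree_vertex_reduced[of M x2 "a - 1"] by (simp add: admissible_def a_def)
  ultimately show "last x1 \<noteq> x2 ! length x1" using x1 by (simp add: a_def)
qed

section \<open>The drift of the Lyapunov function\<close>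

(* The exact change of G_s summed over the M moves of the first leg, as a function of the depth h
   of the confluent and the leg lengths a, b. The three branches are: the first leg is off the
   path to the second one (h < a), it is at the root, or it is at the confluent away from the root. *)
definition leg_drift :: "nat \<Rightarrow> nat \<Rightarrow> nat \<Rightarrow> nat \<Rightarrow> nat \<Rightarrow> real" where
  "leg_drift s M h a b = (let u = real a - real b; D = a + b - 2 * h in
    if h < a then (if a - 1 = h \<and> h = b then 0 else 1 - 2 * u)
          + real (M - 1) * (if D + 1 \<le> s then 2 * u + 1 else 0)
    else if a = 0 then (if b = 1 then 0 else conf_pot s 1 - conf_pot s 0 + 1 - 2 * real b)
          + real (M - 1) * (if b + 1 \<le> s then 1 - 2 * real b else 0)
    else (if D + 1 \<le> s then conf_pot s (a - 1) - conf_pot s a + 1 + 2 * real D else 0)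
       + (if D = 1 then 0 else conf_pot s (a + 1) - conf_pot s a + 1 - 2 * real D)
       + real (M - 2) * (if D + 1 \<le> s then 1 - 2 * real D else 0))"

lemma lyap_move_first:
  "lyap s (spider_move s (0, j) (x1, x2)) =
    (let y = tree_nbr x1 j; l = lcp_len y x2 in
     if \<not> (l = length y \<and> length y = length x2) \<and> length y + length x2 - 2 * l \<le> s
     then conf_pot s l + (real (length y) - real (length x2)) ^ 2 else lyap s (x1, x2))"
  using lcp_len_eq_iff[of "tree_nbr x1 j" x2]
  by (auto simp: spider_move_def tree_dist_def lyap_def Let_def)

lemma sum_except_one:
  assumes "k < M" "\<And>j. j < M \<Longrightarrow> j \<noteq> k \<Longrightarrow> f j = c"
  shows "(\<Sum>j<M. f j) = f k + real (M - 1) * (c::real)"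
proof -
  have "(\<Sum>j<M. f j) = f k + (\<Sum>j\<in>{..<M} - {k}. f j)"
    using assms(1) by (simp add: sum.remove)
  also have "(\<Sum>j\<in>{..<M} - {k}. f j) = real (M - 1) * c"
    using assms by (simp add: sum.cong[of _ _ f "\<lambda>_. c"])
  finally show ?thesis .
qed

lemma sum_except_two:
  assumes "k1 < M" "k2 < M" "k1 \<noteq> k2" "\<And>j. j < M \<Longrightarrow> j \<noteq> k1 \<Longrightarrow> j \<noteq> k2 \<Longrightarrow> f j = c"
  shows "(\<Sum>j<M. f j) = f k1 + f k2 + real (M - 2) * (c::real)"
proof -
  have "(\<Sum>j<M. f j) = f k1 + (\<Sum>j\<in>{..<M} - {k1}. f j)"
    using assms(1) by (simp add: sum.remove)
  also have "(\<Sum>j\<in>{..<M} - {k1}. f j) = f k2 + (\<Sum>j\<in>{..<M} - {k1} - {k2}. f j)"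
    using assms(2,3) by (subst sum.remove[of _ k2]) auto
  also have "(\<Sum>j\<in>{..<M} - {k1} - {k2}. f j) = real (M - 2) * c"
    using assms by (simp add: sum.cong[of _ _ f "\<lambda>_. c"] card_Diff_singleton_if)
  finally show ?thesis by simp
qed

(* The first leg is not on the geodesic to the second leg: one move goes up, M - 1 go down,
   and the confluent does not move. *)
lemma leg_sum_off_path:
  assumes adm: "admissible M s (x1, x2)" and off: "lcp_len x1 x2 < length x1"
  shows "(\<Sum>j<M. lyap s (spider_move s (0, j) (x1, x2))) =
     real M * lyap s (x1, x2) + leg_drift s M (lcp_len x1 x2) (length x1) (length x2)"
proof -
  define h a b where "h = lcp_len x1 x2" and "a = length x1" and "b = length x2"
  have G: "lyap s (x1, x2) = conf_pot s h + (real a - real b) ^ 2" by (simp add: lyap_def h_def a_def b_def)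
  have dist: "a + b - 2 * h \<le> s" and hb: "h \<le> b" and ha: "h < a" and x1: "x1 \<noteq> []"
    using adm off lcp_len_le[of x1 x2] by (auto simp: admissible_def tree_dist_def h_def a_def b_def)
  define k where "k = last x1"
  have kM: "k < M" using adm x1 tree_vertex_last unfolding k_def admissible_def by auto
  have a1: "real (a - 1) = real a - 1" using ha by simp
  have down: "lyap s (spider_move s (0, k) (x1, x2)) =
      lyap s (x1, x2) + (if a - 1 = h \<and> h = b then 0 else 1 - 2 * (real a - real b))"
  proof -
    have nbr: "tree_nbr x1 k = butlast x1" and lcp: "lcp_len (butlast x1) x2 = h"
      using x1 ha by (simp_all add: k_def tree_nbr_def lcp_len_butlast h_def a_def)
    show ?thesis unfolding lyap_move_first Let_def nbr lcp length_butlast a_def[symmetric] b_def[symmetric]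
      using dist ha a1
      by (auto simp: G power2_eq_square algebra_simps)
  qed
  have up: "lyap s (spider_move s (0, j) (x1, x2)) =
      lyap s (x1, x2) + (if a + b - 2 * h + 1 \<le> s then 2 * (real a - real b) + 1 else 0)"
    if "j < M" "j \<noteq> k" for j
  proof -
    have nbr: "tree_nbr x1 j = x1 @ [j]" and lcp: "lcp_len (x1 @ [j]) x2 = h"
      using x1 that ha by (simp_all add: k_def tree_nbr_def lcp_len_snoc h_def a_def)
    have "a + 1 + b - 2 * h = a + b - 2 * h + 1" using ha hb by simp
    then show ?thesis unfolding lyap_move_first Let_def nbr lcp length_append_singleton a_def[symmetric] b_def[symmetric]
      using ha by (auto simp: G power2_eq_square algebra_simps)
  qed
  have "(\<Sum>j<M. lyap s (spider_move s (0, j) (x1, x2))) = lyap s (spider_move s (0, k) (x1, x2))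
      + real (M - 1) * (lyap s (x1, x2) + (if a + b - 2 * h + 1 \<le> s then 2 * (real a - real b) + 1 else 0))"
    by (rule sum_except_one[OF kM up])
  also have "\<dots> = real M * lyap s (x1, x2) + leg_drift s M h a b"
    using kM ha unfolding down leg_drift_def Let_def by (simp add: of_nat_diff algebra_simps)
  finally show ?thesis unfolding h_def a_def b_def .
qed

(* The first leg is at the root, which is the confluent: one move goes towards the second leg. *)
lemma leg_sum_at_root:
  assumes adm: "admissible M s ([], x2)"
  shows "(\<Sum>j<M. lyap s (spider_move s (0, j) ([], x2))) =
     real M * lyap s ([], x2) + leg_drift s M 0 0 (length x2)"
proof -
  define b where "b = length x2"
  have G: "lyap s ([], x2) = conf_pot s 0 + (real b) ^ 2" by (simp add: lyap_def b_def)
  have x2: "x2 \<noteq> []" and dist: "b \<le> s" using adm by (auto simp: admissible_def tree_dist_def b_def)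
  define k where "k = x2 ! 0"
  have kM: "k < M" using adm x2 tree_vertex_nth[of M x2 0] unfolding k_def admissible_def by auto
  have toward: "lyap s (spider_move s (0, k) ([], x2)) =
      lyap s ([], x2) + (if b = 1 then 0 else conf_pot s 1 - conf_pot s 0 + 1 - 2 * real b)"
  proof -
    have nbr: "tree_nbr [] k = [k]" and lcp: "lcp_len [k] x2 = 1"
      using x2 by (simp_all add: tree_nbr_def lcp_len_single k_def)
    show ?thesis unfolding lyap_move_first Let_def nbr lcp b_def[symmetric] using dist x2 b_def
      by (auto simp: G power2_eq_square algebra_simps)
  qed
  have away: "lyap s (spider_move s (0, j) ([], x2)) =
      lyap s ([], x2) + (if b + 1 \<le> s then 1 - 2 * real b else 0)" if "j < M" "j \<noteq> k" for j
  proof -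
    have nbr: "tree_nbr [] j = [j]" and lcp: "lcp_len [j] x2 = 0"
      using that by (simp_all add: tree_nbr_def lcp_len_single k_def)
    show ?thesis unfolding lyap_move_first Let_def nbr lcp b_def[symmetric]
      by (auto simp: G power2_eq_square algebra_simps)
  qed
  have "(\<Sum>j<M. lyap s (spider_move s (0, j) ([], x2))) = lyap s (spider_move s (0, k) ([], x2))
      + real (M - 1) * (lyap s ([], x2) + (if b + 1 \<le> s then 1 - 2 * real b else 0))"
    by (rule sum_except_one[OF kM away])
  also have "\<dots> = real M * lyap s ([], x2) + leg_drift s M 0 0 b"
    using kM unfolding toward leg_drift_def Let_def by (simp add: of_nat_diff algebra_simps)
  finally show ?thesis unfolding b_def .
qed

(* The first leg is at the confluent away from the root: it can move to its parent, towards the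
   second leg (moving the confluent down), or into one of the M - 2 other subtrees. *)
lemma leg_sum_at_confluent:
  assumes adm: "admissible M s (x1, x2)" and x1: "x1 \<noteq> []" and conf: "lcp_len x1 x2 = length x1"
  shows "(\<Sum>j<M. lyap s (spider_move s (0, j) (x1, x2))) =
     real M * lyap s (x1, x2) + leg_drift s M (length x1) (length x1) (length x2)"
proof -
  define a b where "a = length x1" and "b = length x2"
  have G: "lyap s (x1, x2) = conf_pot s a + (real a - real b) ^ 2" by (simp add: lyap_def conf a_def b_def)
  have ab: "a < b" using confluent_letters[OF adm x1 conf] by (simp add: a_def b_def)
  have dist: "b - a \<le> s" using adm conf by (simp add: admissible_def tree_dist_def a_def b_def)
  have a0: "0 < a" using x1 by (simp add: a_def)
  define k1 k2 where "k1 = last x1" and "k2 = x2 ! a"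
  have k1M: "k1 < M" and k2M: "k2 < M" and k12: "k1 \<noteq> k2"
    using confluent_letters[OF adm x1 conf] by (simp_all add: k1_def k2_def a_def)
  have a1: "real (a - 1) = real a - 1" using a0 by simp
  have down: "lyap s (spider_move s (0, k1) (x1, x2)) = lyap s (x1, x2)
      + (if b - a + 1 \<le> s then conf_pot s (a - 1) - conf_pot s a + 1 + 2 * real (b - a) else 0)"
  proof -
    have nbr: "tree_nbr x1 k1 = butlast x1" and lcp: "lcp_len (butlast x1) x2 = a - 1"
      using x1 conf by (simp_all add: k1_def tree_nbr_def lcp_len_butlast a_def)
    have "a - 1 + b - 2 * (a - 1) = b - a + 1" using a0 ab by simp
    then show ?thesis unfolding lyap_move_first Let_def nbr lcp length_butlast a_def[symmetric] b_def[symmetric]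
      using ab a1
      by (auto simp: G of_nat_diff power2_eq_square algebra_simps)
  qed
  have along: "lyap s (spider_move s (0, k2) (x1, x2)) = lyap s (x1, x2)
      + (if b - a = 1 then 0 else conf_pot s (a + 1) - conf_pot s a + 1 - 2 * real (b - a))"
  proof -
    have nbr: "tree_nbr x1 k2 = x1 @ [k2]" and lcp: "lcp_len (x1 @ [k2]) x2 = a + 1"
      using x1 k12 conf ab by (simp_all add: k1_def k2_def tree_nbr_def lcp_len_snoc a_def b_def)
    show ?thesis unfolding lyap_move_first Let_def nbr lcp length_append_singleton a_def[symmetric] b_def[symmetric]
      using ab dist by (auto simp: G of_nat_diff power2_eq_square algebra_simps)
  qed
  have away: "lyap s (spider_move s (0, j) (x1, x2)) = lyap s (x1, x2)
      + (if b - a + 1 \<le> s then 1 - 2 * real (b - a) else 0)" if "j < M" "j \<noteq> k1" "j \<noteq> k2" for j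
  proof -
    have nbr: "tree_nbr x1 j = x1 @ [j]" and lcp: "lcp_len (x1 @ [j]) x2 = a"
      using x1 that conf ab by (simp_all add: k1_def k2_def tree_nbr_def lcp_len_snoc a_def b_def)
    have "a + 1 + b - 2 * a = b - a + 1" using ab by simp
    then show ?thesis unfolding lyap_move_first Let_def nbr lcp length_append_singleton a_def[symmetric] b_def[symmetric]
      using ab by (auto simp: G of_nat_diff power2_eq_square algebra_simps)
  qed
  have D: "a + b - 2 * a = b - a" using ab by simp
  have "(\<Sum>j<M. lyap s (spider_move s (0, j) (x1, x2))) = lyap s (spider_move s (0, k1) (x1, x2))
      + lyap s (spider_move s (0, k2) (x1, x2))
      + real (M - 2) * (lyap s (x1, x2) + (if b - a + 1 \<le> s then 1 - 2 * real (b - a) else 0))"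
    by (rule sum_except_two[OF k1M k2M k12 away])
  also have "\<dots> = real M * lyap s (x1, x2) + leg_drift s M a a b"
    using k1M k2M k12 a0 D unfolding down along leg_drift_def Let_def by (simp add: of_nat_diff algebra_simps)
  finally show ?thesis unfolding a_def b_def .
qed

lemma leg_sum:
  assumes "admissible M s (x1, x2)"
  shows "(\<Sum>j<M. lyap s (spider_move s (0, j) (x1, x2))) =
     real M * lyap s (x1, x2) + leg_drift s M (lcp_len x1 x2) (length x1) (length x2)"
proof (cases "lcp_len x1 x2 < length x1")
  case True then show ?thesis using leg_sum_off_path[OF assms] by simp
next
  case False
  then have conf: "lcp_len x1 x2 = length x1" using lcp_len_le(1)[of x1 x2] by simp
  show ?thesis
  proof (cases "x1 = []")
    case True then show ?thesis using leg_sum_at_root assms by simp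
  next
    case False then show ?thesis using leg_sum_at_confluent[OF assms False conf] conf by simp
  qed
qed

(* The key inequality when one leg is at the confluent: the contributions of both legs add up
   to at most 4M. Here M >= 3 and s >= 2 enter. *)
lemma leg_drift_pair_bound_at_confluent:
  assumes ab: "a < b" "b - a \<le> s" and s: "s \<ge> 2" and M: "M \<ge> 3"
  shows "leg_drift s M a a b + leg_drift s M a b a \<le> 4 * real M"
proof -
  define D where "D = b - a"
  have D: "D \<ge> 1" "D \<le> s" "a + b - 2 * a = D" "b + a - 2 * a = D" "real b - real a = real D"
    using ab by (auto simp: D_def of_nat_diff)
  have M12: "real (M - 1) = real M - 1" "real (M - 2) = real M - 2" using M by auto
  have other: "leg_drift s M a b a = (if D = 1 then 0 else 1 - 2 * real D)
      + (real M - 1) * (if D + 1 \<le> s then 2 * real D + 1 else 0)"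
    using ab D M12 by (auto simp: leg_drift_def Let_def)
  show ?thesis
  proof (cases "a = 0")
    case True
    have "conf_pot s 1 - conf_pot s 0 = 1/2" using s by (simp add: conf_pot_def)
    then have "leg_drift s M a a b = (if D = 1 then 0 else 1/2 + 1 - 2 * real D)
        + (real M - 1) * (if D + 1 \<le> s then 1 - 2 * real D else 0)"
      using True D M12 by (simp add: leg_drift_def Let_def D_def)
    then show ?thesis unfolding other using D M
      by (cases "D = 1"; cases "D + 1 \<le> s") (auto simp: algebra_simps)
  next
    case False
    have own: "leg_drift s M a a b = (if D + 1 \<le> s then conf_pot s (a - 1) - conf_pot s a + 1 + 2 * real D else 0)
       + (if D = 1 then 0 else conf_pot s (a + 1) - conf_pot s a + 1 - 2 * real D)
       + (real M - 2) * (if D + 1 \<le> s then 1 - 2 * real D else 0)"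
      using False ab D M12 by (simp add: leg_drift_def Let_def)
    have "0 \<le> conf_pot s (a + 1) - conf_pot s a" "conf_pot s (a + 1) - conf_pot s a \<le> real s"
      by (rule conf_pot_increment)+
    moreover have "conf_pot s (a + 1) + conf_pot s (a - 1) - 2 * conf_pot s a \<le> 1"
      using conf_pot_convexity_defect[of a s] False by simp
    moreover have "conf_pot s (a - 1) \<le> conf_pot s a" by (rule conf_pot_mono) simp
    ultimately show ?thesis unfolding own other using D M s
      by (cases "D = 1"; cases "D + 1 \<le> s") (auto simp: algebra_simps)
  qed
qed

lemma leg_drift_pair_bound:
  assumes "h \<le> a" "h \<le> b" "\<not> (h = a \<and> h = b)" "a + b - 2 * h \<le> s" "s \<ge> 2" "M \<ge> 3"
  shows "leg_drift s M h a b + leg_drift s M h b a \<le> 4 * real M"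
proof -
  consider "h < a" "h < b" | "h = a" "a < b" | "h = b" "b < a" using assms by linarith
  then show ?thesis
  proof cases
    case 1
    have "leg_drift s M h a b + leg_drift s M h b a = 2 + (real M - 1) * (if a + b - 2 * h + 1 \<le> s then 2 else 0)"
      using 1 assms(6) by (simp add: leg_drift_def Let_def add.commute of_nat_diff algebra_simps)
    then show ?thesis using assms by auto
  next
    case 2 then show ?thesis using leg_drift_pair_bound_at_confluent[of a b s M] assms by simp
  next
    case 3 then show ?thesis using leg_drift_pair_bound_at_confluent[of b a s M] assms by (simp add: add.commute)
  qed
qed

lemma lyap_drift:
  assumes adm: "admissible M s st" and M: "M \<ge> 3" and s: "s \<ge> 2"
  shows "(\<Sum>c\<in>{0,1} \<times> {..<M}. lyap s (spider_move s c st)) \<le> 2 * real M * lyap s st + 4 * real M"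
proof -
  obtain x1 x2 where st: "st = (x1, x2)" by fastforce
  have adm12: "admissible M s (x1, x2)" and adm21: "admissible M s (x2, x1)"
    using adm admissible_swap st by auto
  have "(\<Sum>c\<in>{0,1} \<times> {..<M}. lyap s (spider_move s c st))
      = (\<Sum>l\<in>{0::nat,1}. \<Sum>j<M. lyap s (spider_move s (l, j) st))"
    by (simp add: sum.cartesian_product)
  also have "\<dots> = (\<Sum>j<M. lyap s (spider_move s (0, j) (x1, x2))) + (\<Sum>j<M. lyap s (spider_move s (0, j) (x2, x1)))"
    by (simp add: st move_second_swap lyap_swap)
  also have "\<dots> = 2 * real M * lyap s st + (leg_drift s M (lcp_len x1 x2) (length x1) (length x2)
         + leg_drift s M (lcp_len x1 x2) (length x2) (length x1))"
    using leg_sum[OF adm12] leg_sum[OF adm21] lyap_swap[of s "(x1, x2)"] by (simp add: st lcp_len_sym)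
  also have "\<dots> \<le> 2 * real M * lyap s st + 4 * real M"
  proof (intro add_left_mono leg_drift_pair_bound)
    show "\<not> (lcp_len x1 x2 = length x1 \<and> lcp_len x1 x2 = length x2)"
      using adm12 lcp_len_eq_iff[of x1 x2] by (auto simp: admissible_def)
    show "length x1 + length x2 - 2 * lcp_len x1 x2 \<le> s"
      using adm12 by (simp add: admissible_def tree_dist_def)
  qed (use lcp_len_le M s in auto)
  finally show ?thesis .
qed

abbreviation attempt_pmf :: "nat \<Rightarrow> (nat \<times> nat) pmf" where
  "attempt_pmf M \<equiv> pmf_of_set ({0, 1} \<times> {..<M})"

lemma attempt_set_nonempty: "M \<ge> 1 \<Longrightarrow> {0::nat, 1} \<times> {..<M::nat} \<noteq> {}"
proof -
  assume "M \<ge> 1"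
  then have "(0, 0) \<in> {0::nat, 1} \<times> {..<M}" by simp
  then show ?thesis by blast
qed

lemma prob_space_step: "M \<ge> 1 \<Longrightarrow> prob_space (spider_step_measure M)"
  unfolding spider_step_measure_def
  by (intro prob_space_pair prob_space_measure_pmf prob_space_exponential_density) auto

lemma nn_integral_exponential_density:
  assumes "l > 0" shows "(\<integral>\<^sup>+x. ennreal (exponential_density l x) \<partial>lborel) = 1"
proof -
  interpret prob_space "density lborel (exponential_density l)"
    by (rule prob_space_exponential_density[OF assms])
  show ?thesis using emeasure_space_1 by (subst (asm) emeasure_density) auto
qed

lemma laplace_exponential:
  assumes l: "l > 0" and th: "\<theta> > 0"
  shows "(\<integral>\<^sup>+x. ennreal (exp (- \<theta> * max 0 x)) \<partial>density lborel (exponential_density l)) = ennreal (l / (l + \<theta>))"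
proof -
  have eq: "ennreal (exponential_density l x) * ennreal (exp (- \<theta> * max 0 x))
      = ennreal (l / (l + \<theta>)) * ennreal (exponential_density (l + \<theta>) x)" for x
  proof (cases "x < 0")
    case False
    have "l * exp (- x * l) * exp (- \<theta> * x) = l * exp (- x * (l + \<theta>))"
      by (simp add: mult.assoc exp_add[symmetric] algebra_simps)
    also have "\<dots> = l / (l + \<theta>) * ((l + \<theta>) * exp (- x * (l + \<theta>)))" using l th by simp
    finally show ?thesis using False l th
      by (simp add: exponential_density_def ennreal_mult[symmetric] max_def)
  qed (simp add: exponential_density_def)
  have "(\<integral>\<^sup>+x. ennreal (exp (- \<theta> * max 0 x)) \<partial>density lborel (exponential_density l))
      = (\<integral>\<^sup>+x. ennreal (exponential_density l x) * ennreal (exp (- \<theta> * max 0 x)) \<partial>lborel)"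
    by (subst nn_integral_density) auto
  also have "\<dots> = (\<integral>\<^sup>+x. ennreal (l / (l + \<theta>)) * ennreal (exponential_density (l + \<theta>) x) \<partial>lborel)"
    unfolding eq ..
  also have "\<dots> = ennreal (l / (l + \<theta>))"
    using nn_integral_exponential_density[of "l + \<theta>"] l th by (subst nn_integral_cmult) auto
  finally show ?thesis .
qed

(* Discounting by exp(-theta) over an Exp(l) holding time exactly absorbs the drift 2 of one attempt. *)
lemma exponential_discount:
  fixes l \<theta> :: real assumes "l > 0" "\<theta> > 0" shows "(2 + 2 * l / \<theta>) * (l / (l + \<theta>)) = 2 * l / \<theta>"
proof -
  have "2 + 2 * l / \<theta> = 2 * (l + \<theta>) / \<theta>" using assms by (simp add: field_simps)
  then show ?thesis using assms by (simp add: divide_simps)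
qed

lemma mean_lyap_after_attempt:
  assumes adm: "admissible M s st" and M: "M \<ge> 3" and s: "s \<ge> 2"
  shows "(\<integral>\<^sup>+c. ennreal (lyap s (spider_move s c st)) \<partial>measure_pmf (attempt_pmf M)) \<le> ennreal (lyap s st + 2)"
proof -
  let ?A = "{0::nat, 1} \<times> {..<M}"
  have "(\<integral>\<^sup>+c. ennreal (lyap s (spider_move s c st)) \<partial>measure_pmf (attempt_pmf M))
      = (\<Sum>c\<in>?A. ennreal (lyap s (spider_move s c st))) / of_nat (card ?A)"
    using attempt_set_nonempty M by (intro nn_integral_pmf_of_set) auto
  also have "\<dots> = ennreal ((\<Sum>c\<in>?A. lyap s (spider_move s c st)) / real (2 * M))"
    using M by (simp add: sum_ennreal lyap_nonneg sum_nonneg divide_ennreal card_cartesian_product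
        ennreal_of_nat_eq_real_of_nat)
  also have "\<dots> \<le> ennreal (lyap s st + 2)"
    using lyap_drift[OF adm M s] M by (intro ennreal_leI) (simp add: divide_le_eq algebra_simps)
  finally show ?thesis .
qed

(* The holding time before an attempt (negative values have probability zero). *)
definition hold :: "(nat \<times> nat) \<times> real \<Rightarrow> real" where
  "hold x = max 0 (snd x)"

definition lyap_test :: "nat \<Rightarrow> real \<Rightarrow> nat \<Rightarrow> spider_state \<Rightarrow> real \<Rightarrow> real" where
  "lyap_test M \<theta> s st t = lyap s st + 4 * real M / \<theta> * exp (\<theta> * t)"

lemma attempt_bound_given_holding_time:
  assumes adm: "admissible M s st" and M: "M \<ge> 3" and s: "s \<ge> 2" and th: "\<theta> > 0"
  shows "(\<integral>\<^sup>+c. (if max 0 y \<le> t then ennreal (lyap_test M \<theta> s (spider_move s c st) (t - max 0 y))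
            else ennreal (lyap s st)) \<partial>measure_pmf (attempt_pmf M))
     \<le> ennreal (lyap s st + (2 + 4 * real M / \<theta>) * exp (\<theta> * t) * exp (- \<theta> * max 0 y))"
proof (cases "max 0 y \<le> t")
  case True
  define k where "k = 4 * real M / \<theta> * exp (\<theta> * (t - max 0 y))"
  have k0: "k \<ge> 0" using th by (simp add: k_def)
  have "(\<integral>\<^sup>+c. ennreal (lyap_test M \<theta> s (spider_move s c st) (t - max 0 y)) \<partial>measure_pmf (attempt_pmf M))
      = (\<integral>\<^sup>+c. ennreal (lyap s (spider_move s c st)) \<partial>measure_pmf (attempt_pmf M)) + ennreal k"
    using k0 by (simp add: lyap_test_def k_def lyap_nonneg ennreal_plus nn_integral_add
        measure_pmf.emeasure_space_1)
  also have "\<dots> \<le> ennreal (lyap s st + 2 + k)"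
    using mean_lyap_after_attempt[OF adm M s] k0 lyap_nonneg[of s st] by (simp add: ennreal_plus add_right_mono)
  also have "\<dots> \<le> ennreal (lyap s st + (2 + 4 * real M / \<theta>) * exp (\<theta> * t) * exp (- \<theta> * max 0 y))"
  proof (rule ennreal_leI)
    have "exp (\<theta> * t) * exp (- \<theta> * max 0 y) = exp (\<theta> * (t - max 0 y))"
      by (simp add: exp_add[symmetric] algebra_simps)
    moreover have "1 \<le> exp (\<theta> * (t - max 0 y))" using True th by simp
    ultimately show "lyap s st + 2 + k \<le> lyap s st + (2 + 4 * real M / \<theta>) * exp (\<theta> * t) * exp (- \<theta> * max 0 y)"
      by (simp add: k_def algebra_simps)
  qed
  finally show ?thesis using True by simp
next
  case False
  have "0 \<le> (2 + 4 * real M / \<theta>) * exp (\<theta> * t) * exp (- \<theta> * max 0 y)" using th by simp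
  then show ?thesis using False
    by (simp del: max.bounded_iff add: measure_pmf.emeasure_space_1 ennreal_leI)
qed

lemma step_bound:
  assumes adm: "admissible M s st" and M: "M \<ge> 3" and s: "s \<ge> 2" and th: "\<theta> > 0"
  shows "(\<integral>\<^sup>+x. (if hold x \<le> t then ennreal (lyap_test M \<theta> s (spider_move s (fst x) st) (t - hold x))
            else ennreal (lyap s st)) \<partial>spider_step_measure M)
     \<le> ennreal (lyap_test M \<theta> s st t)"
proof -
  define l where "l = 2 * real M"
  define K where "K = (2 + 4 * real M / \<theta>) * exp (\<theta> * t)"
  have l: "l > 0" using M by (simp add: l_def)
  let ?P = "measure_pmf (attempt_pmf M)"
  let ?E = "density lborel (exponential_density l)"
  interpret E: prob_space ?E by (rule prob_space_exponential_density[OF l])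
  interpret PE: pair_sigma_finite ?P ?E ..
  define h where "h x = (if hold x \<le> t then ennreal (lyap_test M \<theta> s (spider_move s (fst x) st) (t - hold x))
            else ennreal (lyap s st))" for x
  have h_meas: "h \<in> borel_measurable (?P \<Otimes>\<^sub>M ?E)"
  proof -
    have "(\<lambda>x. lyap_test M \<theta> s (spider_move s (fst x) st) (t - hold x)) \<in> borel_measurable (?P \<Otimes>\<^sub>M ?E)"
      unfolding lyap_test_def hold_def by measurable
    then show ?thesis unfolding h_def hold_def by measurable
  qed
  have "(\<integral>\<^sup>+x. h x \<partial>spider_step_measure M) = (\<integral>\<^sup>+ y. (\<integral>\<^sup>+ c. h (c, y) \<partial>?P) \<partial>?E)"
    unfolding spider_step_measure_def l_def by (rule PE.nn_integral_snd[OF h_meas, unfolded l_def, symmetric])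
  also have "\<dots> \<le> (\<integral>\<^sup>+ y. ennreal (lyap s st) + ennreal K * ennreal (exp (- \<theta> * max 0 y)) \<partial>?E)"
  proof (intro nn_integral_mono)
    fix y
    have "(\<integral>\<^sup>+ c. h (c, y) \<partial>?P) \<le> ennreal (lyap s st + K * exp (- \<theta> * max 0 y))"
      unfolding h_def hold_def fst_conv snd_conv K_def by (rule attempt_bound_given_holding_time[OF adm M s th])
    also have "\<dots> = ennreal (lyap s st) + ennreal K * ennreal (exp (- \<theta> * max 0 y))"
      using th lyap_nonneg[of s st] by (simp add: K_def ennreal_plus ennreal_mult)
    finally show "(\<integral>\<^sup>+ c. h (c, y) \<partial>?P) \<le> \<dots>" .
  qed
  also have "\<dots> = ennreal (lyap s st) + ennreal K * ennreal (l / (l + \<theta>))"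
  proof -
    have "emeasure ?E UNIV = 1" using E.emeasure_space_1 by simp
    then show ?thesis using laplace_exponential[OF l th] by (subst nn_integral_add) (auto simp: nn_integral_cmult)
  qed
  also have "\<dots> = ennreal (lyap_test M \<theta> s st t)"
  proof -
    have "K * (l / (l + \<theta>)) = (2 + 2 * l / \<theta>) * (l / (l + \<theta>)) * exp (\<theta> * t)"
      by (simp add: K_def l_def)
    also have "\<dots> = 4 * real M / \<theta> * exp (\<theta> * t)"
      using exponential_discount[OF l th] by (simp add: l_def)
    finally have "K * (l / (l + \<theta>)) = 4 * real M / \<theta> * exp (\<theta> * t)" .
    then show ?thesis using l th lyap_nonneg[of s st]
      by (simp add: lyap_test_def K_def ennreal_plus ennreal_mult[symmetric])
  qed
  finally show ?thesis unfolding h_def .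
qed

section \<open>The walk truncated after finitely many attempts\<close>

(* The position after at most n attempts when the attempts occurring after time t are ignored. *)
primrec trunc_pos :: "nat \<Rightarrow> nat \<Rightarrow> spider_state \<Rightarrow> real \<Rightarrow> ((nat \<times> nat) \<times> real) stream \<Rightarrow> spider_state" where
  "trunc_pos s 0 st t \<omega> = st"
| "trunc_pos s (Suc n) st t \<omega> = (if hold (shd \<omega>) \<le> t
     then trunc_pos s n (spider_move s (fst (shd \<omega>)) st) (t - hold (shd \<omega>)) (stl \<omega>) else st)"

lemma hold_measurable[measurable]: "hold \<in> borel_measurable (spider_step_measure M)"
  unfolding hold_def spider_step_measure_def by measurable

lemma attempt_measurable[measurable]: "fst \<in> measurable (spider_step_measure M) (count_space UNIV)"
  unfolding spider_step_measure_def by measurable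

lemma trunc_pos_measurable_pair:
  "(\<lambda>x. trunc_pos s n st (fst x) (snd x)) \<in> measurable (borel \<Otimes>\<^sub>M stream_space (spider_step_measure M)) (count_space UNIV)"
proof (induction n arbitrary: st)
  case (Suc n)
  let ?N = "borel \<Otimes>\<^sub>M stream_space (spider_step_measure M)"
  have shift: "(\<lambda>x. (fst x - hold (shd (snd x)), stl (snd x))) \<in> measurable ?N ?N" by measurable
  have "(\<lambda>x. trunc_pos s n (spider_move s c st) (fst x - hold (shd (snd x))) (stl (snd x))) \<in> measurable ?N (count_space UNIV)"
    for c using measurable_comp[OF shift Suc[of "spider_move s c st"]] by (simp add: comp_def)
  then have "(\<lambda>x. trunc_pos s n (spider_move s (fst (shd (snd x))) st) (fst x - hold (shd (snd x))) (stl (snd x)))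
      \<in> measurable ?N (count_space UNIV)"
    by (rule measurable_compose_countable) measurable
  then show ?case by simp
qed simp

lemma trunc_pos_measurable:
  "(\<lambda>\<omega>. g (trunc_pos s n st t \<omega>) :: ennreal) \<in> borel_measurable (spider_space M)"
proof -
  have "(\<lambda>\<omega>. (t, \<omega>)) \<in> measurable (spider_space M) (borel \<Otimes>\<^sub>M stream_space (spider_step_measure M))"
    unfolding spider_space_def by measurable
  from measurable_comp[OF this trunc_pos_measurable_pair] show ?thesis
    using measurable_comp[OF _ borel_measurable_count_space] by (simp add: comp_def)
qed

lemma AE_step_valid:
  assumes M: "M \<ge> 1" shows "AE x in spider_step_measure M. snd (fst x) < M \<and> 0 \<le> snd x"
proof -
  let ?P = "measure_pmf (attempt_pmf M)"
  let ?E = "density lborel (exponential_density (2 * real M))"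
  interpret E: prob_space ?E by (rule prob_space_exponential_density) (use M in simp)
  interpret PE: pair_sigma_finite ?P ?E ..
  have "AE y in ?E. 0 \<le> y"
    by (subst AE_density) (auto simp: exponential_density_def intro!: AE_I2 split: if_splits)
  moreover have "AE c in ?P. snd c < M" using attempt_set_nonempty[OF M] by (auto simp: AE_measure_pmf_iff)
  ultimately have "AE c in ?P. AE y in ?E. snd (fst (c, y)) < M \<and> 0 \<le> snd (c, y)" by auto
  then have "AE x in ?P \<Otimes>\<^sub>M ?E. snd (fst x) < M \<and> 0 \<le> snd x" by (rule PE.AE_pair_measure[rotated]) measurable
  then show ?thesis unfolding spider_step_measure_def .
qed

lemma AE_stream_valid:
  assumes M: "M \<ge> 1"
  shows "AE \<omega> in spider_space M. \<forall>i. snd (fst (\<omega> !! i)) < M \<and> 0 \<le> snd (\<omega> !! i)"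
proof -
  interpret prob_space "spider_step_measure M" by (rule prob_space_step[OF M])
  have "Measurable.pred (spider_step_measure M) (\<lambda>x. snd (fst x) < M \<and> 0 \<le> snd x)"
    unfolding spider_step_measure_def by measurable
  from AE_stream_all[OF this AE_step_valid[OF M]] show ?thesis
    unfolding spider_space_def stream_all_def by simp
qed

lemma trunc_pos_admissible:
  "admissible M s st \<Longrightarrow> \<forall>i. snd (fst (\<omega> !! i)) < M \<Longrightarrow> admissible M s (trunc_pos s n st t \<omega>)"
proof (induction n arbitrary: st t \<omega>)
  case (Suc n)
  have "admissible M s (spider_move s (fst (shd \<omega>)) st)"
    using move_admissible[OF Suc.prems(1)] Suc.prems(2) by (metis snth.simps(1))
  moreover have "\<forall>i. snd (fst (stl \<omega> !! i)) < M" using Suc.prems(2) by (metis snth.simps(2))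
  ultimately show ?case using Suc.IH Suc.prems by simp
qed simp

lemma expected_lyap_bound:
  assumes M: "M \<ge> 3" and s: "s \<ge> 2" and th: "\<theta> > 0" and adm: "admissible M s st"
  shows "(\<integral>\<^sup>+\<omega>. ennreal (lyap s (trunc_pos s n st t \<omega>)) \<partial>spider_space M) \<le> ennreal (lyap_test M \<theta> s st t)"
proof -
  interpret step: prob_space "spider_step_measure M" by (rule prob_space_step) (use M in simp)
  interpret path: prob_space "spider_space M"
    unfolding spider_space_def by (rule step.prob_space_stream_space)
  show ?thesis using adm
  proof (induction n arbitrary: st t)
    case 0
    have "lyap s st \<le> lyap_test M \<theta> s st t" using th by (simp add: lyap_test_def)
    then show ?case by (simp add: path.emeasure_space_1 ennreal_leI)
  next
    case (Suc n)
    let ?after = "\<lambda>x. if hold x \<le> t then ennreal (lyap_test M \<theta> s (spider_move s (fst x) st) (t - hold x))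
            else ennreal (lyap s st)"
    have "(\<integral>\<^sup>+\<omega>. ennreal (lyap s (trunc_pos s (Suc n) st t \<omega>)) \<partial>spider_space M)
       = (\<integral>\<^sup>+x. (\<integral>\<^sup>+\<omega>. ennreal (lyap s (trunc_pos s (Suc n) st t (x ## \<omega>))) \<partial>spider_space M) \<partial>spider_step_measure M)"
      unfolding spider_space_def by (rule step.nn_integral_stream_space[OF trunc_pos_measurable[unfolded spider_space_def]])
    also have "\<dots> \<le> (\<integral>\<^sup>+x. ?after x \<partial>spider_step_measure M)"
    proof (rule nn_integral_mono_AE)
      have "AE x in spider_step_measure M. snd (fst x) < M \<and> 0 \<le> snd x"
        using AE_step_valid[of M] M by simp
      then show "AE x in spider_step_measure M.
          (\<integral>\<^sup>+\<omega>. ennreal (lyap s (trunc_pos s (Suc n) st t (x ## \<omega>))) \<partial>spider_space M) \<le> ?after x"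
      proof eventually_elim
        case (elim x)
        then have "admissible M s (spider_move s (fst x) st)" using move_admissible[OF Suc.prems] by simp
        then show ?case using Suc.IH by (simp add: path.emeasure_space_1)
      qed
    qed
    also have "\<dots> \<le> ennreal (lyap_test M \<theta> s st t)" by (rule step_bound[OF Suc.prems M s th])
    finally show ?case .
  qed
qed

primrec chain_from :: "nat \<Rightarrow> spider_state \<Rightarrow> ((nat \<times> nat) \<times> real) stream \<Rightarrow> nat \<Rightarrow> spider_state" where
  "chain_from s st \<omega> 0 = st"
| "chain_from s st \<omega> (Suc k) = chain_from s (spider_move s (fst (shd \<omega>)) st) (stl \<omega>) k"

lemma chain_from_Suc_last: "chain_from s st \<omega> (Suc k) = spider_move s (fst (\<omega> !! k)) (chain_from s st \<omega> k)"
  by (induction k arbitrary: st \<omega>) auto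

lemma spider_chain_eq_chain_from: "spider_chain s \<omega> k = chain_from s (tree_root, [0]) \<omega> k"
  by (induction k) (auto simp: chain_from_Suc_last simp del: chain_from.simps(2))

(* The time of the k-th attempt (counting from 0). *)
definition epoch :: "((nat \<times> nat) \<times> real) stream \<Rightarrow> nat \<Rightarrow> real" where
  "epoch \<omega> k = (\<Sum>i\<le>k. snd (\<omega> !! i))"

lemma epoch_0: "epoch \<omega> 0 = snd (shd \<omega>)"
  by (simp add: epoch_def)

lemma epoch_Suc: "epoch \<omega> (Suc k) = snd (shd \<omega>) + epoch (stl \<omega>) k"
  unfolding epoch_def sum.atMost_Suc_shift by simp

lemma epoch_ge_first:
  assumes "\<forall>i. 0 \<le> snd (\<omega> !! i)" shows "snd (shd \<omega>) \<le> epoch \<omega> k"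
proof (cases k)
  case (Suc j)
  have "0 \<le> epoch (stl \<omega>) j" unfolding epoch_def using assms by (metis snth.simps(2) sum_nonneg)
  then show ?thesis by (simp add: Suc epoch_Suc)
qed (simp add: epoch_0)

lemma epochs_within_Suc:
  assumes "snd (shd \<omega>) \<le> t"
  shows "card {k. k < Suc n \<and> epoch \<omega> k \<le> t} = Suc (card {k. k < n \<and> epoch (stl \<omega>) k \<le> t - snd (shd \<omega>)})"
proof -
  have "{k. k < Suc n \<and> epoch \<omega> k \<le> t} = insert 0 (Suc ` {k. k < n \<and> epoch (stl \<omega>) k \<le> t - snd (shd \<omega>)})"
    using assms by (auto simp: epoch_0 epoch_Suc image_iff gr0_conv_Suc less_Suc_eq_0_disj)
  then show ?thesis by (simp add: card_image)
qed

lemma trunc_pos_eq_chain: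
  "\<forall>i. 0 \<le> snd (\<omega> !! i) \<Longrightarrow> trunc_pos s n st t \<omega> = chain_from s st \<omega> (card {k. k < n \<and> epoch \<omega> k \<le> t})"
proof (induction n arbitrary: st t \<omega>)
  case (Suc n)
  have first: "hold (shd \<omega>) = snd (shd \<omega>)" using Suc.prems by (metis snth.simps(1) hold_def max_def)
  have rest: "\<forall>i. 0 \<le> snd (stl \<omega> !! i)" using Suc.prems by (metis snth.simps(2))
  show ?case
  proof (cases "snd (shd \<omega>) \<le> t")
    case True then show ?thesis using Suc.IH[OF rest] first by (simp add: epochs_within_Suc)
  next
    case False
    then have "\<not> epoch \<omega> k \<le> t" for k using epoch_ge_first[OF Suc.prems, of k] by linarith
    then have none: "{k. k < Suc n \<and> epoch \<omega> k \<le> t} = {}" by simp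
    have "trunc_pos s (Suc n) st t \<omega> = st" using False first by simp
    then show ?thesis by (simp only: none card.empty chain_from.simps(1))
  qed
qed simp

lemma spider_pos_eq_chain: "spider_pos s \<omega> t = chain_from s (tree_root, [0]) \<omega> (card {k. epoch \<omega> k \<le> t})"
  by (simp add: spider_pos_def spider_njumps_def spider_chain_eq_chain_from epoch_def)

(* For every t the continuous-time walk is eventually given by the truncated walks (if only
   finitely many attempts happen up to t) or is at the starting state. *)
lemma spider_pos_eventually_trunc:
  assumes "\<forall>i. 0 \<le> snd (\<omega> !! i)"
  shows "\<forall>\<^sub>F k in sequentially. length (fst (spider_pos s \<omega> t)) \<le> length (fst (trunc_pos s k (tree_root, [0]) t \<omega>))"
proof (cases "finite {k. epoch \<omega> k \<le> t}")
  case True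
  then obtain N where "\<forall>k\<in>{k. epoch \<omega> k \<le> t}. k < N" using finite_nat_bounded by blast
  then have "{k. k < n \<and> epoch \<omega> k \<le> t} = {k. epoch \<omega> k \<le> t}" if "n \<ge> N" for n
    using that by auto
  then have "\<forall>\<^sub>F n in sequentially. spider_pos s \<omega> t = trunc_pos s n (tree_root, [0]) t \<omega>"
    using trunc_pos_eq_chain[OF assms] spider_pos_eq_chain by (auto intro!: eventually_sequentiallyI[of N])
  then show ?thesis by eventually_elim simp
next
  case False
  then show ?thesis by (simp add: spider_pos_eq_chain tree_root_def)
qed

section \<open>The speed bound\<close>

lemma first_leg_speed_bound:
  assumes "admissible M s st" and "s \<ge> 1" and "t > 0"
  shows "ennreal (real (length (fst st)) / t)
    \<le> ennreal (1 / (real s * t)) * ennreal (lyap s st) + ennreal (3 * real s / (2 * t))"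
proof -
  have "real (length (fst st)) / t \<le> (lyap s st / real s + 3 * real s / 2) / t"
    using first_leg_bound[OF assms(1,2)] assms(3) by (simp add: divide_right_mono)
  also have "\<dots> = 1 / (real s * t) * lyap s st + 3 * real s / (2 * t)" by (simp add: add_divide_distrib)
  finally have "real (length (fst st)) / t \<le> 1 / (real s * t) * lyap s st + 3 * real s / (2 * t)" .
  moreover have "ennreal (1 / (real s * t) * lyap s st + 3 * real s / (2 * t))
      = ennreal (1 / (real s * t)) * ennreal (lyap s st) + ennreal (3 * real s / (2 * t))"
    using assms(3) lyap_nonneg[of s st] by (simp add: ennreal_plus ennreal_mult[symmetric])
  ultimately show ?thesis by (metis ennreal_leI)
qed

definition speed_bound :: "nat \<Rightarrow> nat \<Rightarrow> real \<Rightarrow> real" where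
  "speed_bound M s t = (1 + 4 * real M * exp 1 * t) / (real s * t) + 3 * real s / (2 * t)"

(* Combining the expectation bound with theta = 1/t and the pointwise bound. *)
lemma expected_first_leg_bound:
  assumes M: "M \<ge> 3" and s: "s \<ge> 2" and t: "t > 0"
  shows "(\<integral>\<^sup>+\<omega>. ennreal (real (length (fst (trunc_pos s k (tree_root, [0]) t \<omega>))) / t) \<partial>spider_space M)
     \<le> ennreal (speed_bound M s t)"
proof -
  interpret step: prob_space "spider_step_measure M" by (rule prob_space_step) (use M in simp)
  interpret path: prob_space "spider_space M"
    unfolding spider_space_def by (rule step.prob_space_stream_space)
  let ?st = "(tree_root, [0::nat])"
  let ?G = "\<lambda>\<omega>. lyap s (trunc_pos s k ?st t \<omega>)"
  define a b where "a = 1 / (real s * t)" and "b = 3 * real s / (2 * t)"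
  have ab: "a \<ge> 0" "b \<ge> 0" using t by (auto simp: a_def b_def)
  have start: "admissible M s ?st" using start_admissible[of M s] M s by simp
  have "AE \<omega> in spider_space M. \<forall>i. snd (fst (\<omega> !! i)) < M \<and> 0 \<le> snd (\<omega> !! i)"
    using AE_stream_valid M by simp
  then have "AE \<omega> in spider_space M.
      ennreal (real (length (fst (trunc_pos s k ?st t \<omega>))) / t) \<le> ennreal a * ennreal (?G \<omega>) + ennreal b"
  proof eventually_elim
    case (elim \<omega>)
    then have "admissible M s (trunc_pos s k ?st t \<omega>)" using trunc_pos_admissible[OF start] by simp
    then show ?case unfolding a_def b_def using first_leg_speed_bound s t by simp
  qed
  then have "(\<integral>\<^sup>+\<omega>. ennreal (real (length (fst (trunc_pos s k ?st t \<omega>))) / t) \<partial>spider_space M)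
      \<le> (\<integral>\<^sup>+\<omega>. ennreal a * ennreal (?G \<omega>) + ennreal b \<partial>spider_space M)"
    by (rule nn_integral_mono_AE)
  also have "\<dots> = ennreal a * (\<integral>\<^sup>+\<omega>. ennreal (?G \<omega>) \<partial>spider_space M) + ennreal b"
    using trunc_pos_measurable[of "\<lambda>st. ennreal (lyap s st)"]
    by (simp add: nn_integral_add nn_integral_cmult path.emeasure_space_1)
  also have "\<dots> \<le> ennreal a * ennreal (lyap_test M (1 / t) s ?st t) + ennreal b"
    using expected_lyap_bound[OF M s _ start, of "1 / t"] t by (intro add_mono mult_left_mono) auto
  also have "\<dots> = ennreal (speed_bound M s t)"
  proof -
    define X where "X = 1 + 4 * real M * exp 1 * t"
    have "lyap_test M (1 / t) s ?st t = X" using t by (simp add: lyap_test_def start_lyap X_def)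
    moreover have "a * X + b = speed_bound M s t" by (simp add: a_def b_def X_def speed_bound_def)
    moreover have "ennreal a * ennreal X + ennreal b = ennreal (a * X + b)"
      using ab t by (simp add: X_def ennreal_plus ennreal_mult)
    ultimately show ?thesis by simp
  qed
  finally show ?thesis .
qed

lemma speed_bound_limit:
  assumes "s > 0" shows "(\<lambda>n. speed_bound M s (real (Suc n))) \<longlonglongrightarrow> 4 * real M * exp 1 / real s"
proof -
  have frac: "(1 + K * x) / (y * x) + 3 * y / (2 * x) = (1 / y + 3 * y / 2) / x + K / y"
    if "x > 0" "y > 0" for x y K :: real using that by (simp add: field_simps)
  have "speed_bound M s t = (1 / real s + 3 * real s / 2) / t + 4 * real M * exp 1 / real s" if "t > 0" for t
    using assms that unfolding speed_bound_def by (intro frac) auto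
  then have "speed_bound M s (real (Suc n)) = (1 / real s + 3 * real s / 2) / real (Suc n) + 4 * real M * exp 1 / real s"
    for n by simp
  moreover have "(\<lambda>n. (1 / real s + 3 * real s / 2) / real (Suc n)) \<longlonglongrightarrow> 0"
    using LIMSEQ_Suc[OF lim_const_over_n] by simp
  ultimately show ?thesis using tendsto_add[OF _ tendsto_const, of _ 0] by simp
qed

definition trunc_speed :: "nat \<Rightarrow> nat \<Rightarrow> ((nat \<times> nat) \<times> real) stream \<Rightarrow> ennreal" where
  "trunc_speed s n \<omega> = liminf (\<lambda>k. ennreal (real (length (fst (trunc_pos s k (tree_root, [0]) (real (Suc n)) \<omega>))) / real (Suc n)))"

(* Fatou's lemma over the number of attempts bounds the mean truncated speed. *)
lemma expected_trunc_speed: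
  assumes M: "M \<ge> 3" and s: "s \<ge> 2"
  shows "(\<integral>\<^sup>+\<omega>. trunc_speed s n \<omega> \<partial>spider_space M) \<le> ennreal (speed_bound M s (real (Suc n)))"
proof -
  have "(\<integral>\<^sup>+\<omega>. trunc_speed s n \<omega> \<partial>spider_space M)
      \<le> liminf (\<lambda>k. \<integral>\<^sup>+\<omega>. ennreal (real (length (fst (trunc_pos s k (tree_root, [0]) (real (Suc n)) \<omega>))) / real (Suc n)) \<partial>spider_space M)"
    unfolding trunc_speed_def
    using trunc_pos_measurable[where g = "\<lambda>st. ennreal (real (length (fst st)) / real (Suc n))"]
    by (intro nn_integral_liminf) simp
  also have "\<dots> \<le> liminf (\<lambda>k. ennreal (speed_bound M s (real (Suc n))))"
    using expected_first_leg_bound[OF M s] by (intro Liminf_mono always_eventually) auto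
  also have "\<dots> = ennreal (speed_bound M s (real (Suc n)))" by (rule Liminf_const) simp
  finally show ?thesis .
qed

lemma speed_le_liminf_trunc_speed:
  assumes M: "M \<ge> 1"
    and conv: "AE \<omega> in spider_space M.
           ((\<lambda>t. real (tree_dist tree_root (fst (spider_pos s \<omega> t))) / t) \<longlongrightarrow> v) at_top"
  shows "AE \<omega> in spider_space M. ennreal v \<le> liminf (\<lambda>n. trunc_speed s n \<omega>)"
  using AE_stream_valid[OF M] conv
proof eventually_elim
  case (elim \<omega>)
  define f where "f t = real (length (fst (spider_pos s \<omega> t))) / t" for t
  have "(\<lambda>n. f (real (Suc n))) \<longlonglongrightarrow> v"
    using elim(2) filterlim_compose[OF filterlim_real_sequentially filterlim_Suc]
    unfolding f_def tree_dist_def tree_root_def by (auto intro: filterlim_compose)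
  then have "(\<lambda>n. ennreal (f (real (Suc n)))) \<longlonglongrightarrow> ennreal v" by (rule tendsto_ennrealI)
  then have "ennreal v = liminf (\<lambda>n. ennreal (f (real (Suc n))))" by (simp add: lim_imp_Liminf)
  also have "\<dots> \<le> liminf (\<lambda>n. trunc_speed s n \<omega>)"
  proof (intro Liminf_mono always_eventually allI)
    fix n
    have "\<forall>\<^sub>F k in sequentially. ennreal (f (real (Suc n)))
        \<le> ennreal (real (length (fst (trunc_pos s k (tree_root, [0]) (real (Suc n)) \<omega>))) / real (Suc n))"
      using spider_pos_eventually_trunc[of \<omega> s "real (Suc n)"] elim(1)
      by (auto elim!: eventually_mono intro!: ennreal_leI divide_right_mono simp: f_def)
    then show "ennreal (f (real (Suc n))) \<le> trunc_speed s n \<omega>"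
      unfolding trunc_speed_def by (rule Liminf_bounded)
  qed
  finally show ?case .
qed

(* Fatou's lemma over the integer times turns the expectation bound into V(s) <= 4 e M / s. *)
lemma speed_upper_bound:
  assumes M: "M \<ge> 3" and s: "s \<ge> 2"
    and conv: "AE \<omega> in spider_space M.
           ((\<lambda>t. real (tree_dist tree_root (fst (spider_pos s \<omega> t))) / t) \<longlongrightarrow> v) at_top"
  shows "v \<le> 4 * real M * exp 1 / real s"
proof -
  interpret step: prob_space "spider_step_measure M" by (rule prob_space_step) (use M in simp)
  interpret path: prob_space "spider_space M"
    unfolding spider_space_def by (rule step.prob_space_stream_space)
  have meas: "trunc_speed s n \<in> borel_measurable (spider_space M)" for n
    unfolding trunc_speed_def using trunc_pos_measurable by measurable
  have "ennreal v = (\<integral>\<^sup>+\<omega>. ennreal v \<partial>spider_space M)" by (simp add: path.emeasure_space_1)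
  also have "\<dots> \<le> (\<integral>\<^sup>+\<omega>. liminf (\<lambda>n. trunc_speed s n \<omega>) \<partial>spider_space M)"
    using speed_le_liminf_trunc_speed[OF _ conv] M by (intro nn_integral_mono_AE) auto
  also have "\<dots> \<le> liminf (\<lambda>n. \<integral>\<^sup>+\<omega>. trunc_speed s n \<omega> \<partial>spider_space M)"
    using meas by (intro nn_integral_liminf) auto
  also have "\<dots> \<le> liminf (\<lambda>n. ennreal (speed_bound M s (real (Suc n))))"
    using expected_trunc_speed[OF M s] by (intro Liminf_mono always_eventually) auto
  also have "\<dots> = ennreal (4 * real M * exp 1 / real s)"
    using speed_bound_limit[of s M] s by (intro lim_imp_Liminf tendsto_ennrealI) auto
  finally show ?thesis using s by (subst (asm) ennreal_le_iff) auto
qed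

lemma speed_nonneg:
  assumes M: "M \<ge> 1"
    and conv: "AE \<omega> in spider_space M.
           ((\<lambda>t. real (tree_dist tree_root (fst (spider_pos s \<omega> t))) / t) \<longlongrightarrow> v) at_top"
  shows "0 \<le> v"
proof -
  interpret step: prob_space "spider_step_measure M" by (rule prob_space_step[OF M])
  interpret path: prob_space "spider_space M"
    unfolding spider_space_def by (rule step.prob_space_stream_space)
  have "AE \<omega> in spider_space M. 0 \<le> v"
    using conv
  proof eventually_elim
    case (elim \<omega>)
    show ?case
      by (rule tendsto_lowerbound[OF elim]) (auto intro: eventually_mono[OF eventually_ge_at_top[of 0]])
  qed
  then show ?thesis by simp
qed

theorem mainTheorem6:
  fixes M :: nat and V :: "nat \<Rightarrow> real"
  assumes "M \<ge> 3"
    and "\<forall>s\<ge>2. AE \<omega> in spider_space M.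
           ((\<lambda>t. real (tree_dist tree_root (fst (spider_pos s \<omega> t))) / t) \<longlongrightarrow> V s) at_top"
  shows "(V \<longlongrightarrow> 0) sequentially"
proof (rule tendsto_sandwich)
  have bounds: "0 \<le> V s \<and> V s \<le> 4 * real M * exp 1 / real s" if "s \<ge> 2" for s
    using speed_nonneg[of M s "V s"] speed_upper_bound[of M s "V s"] assms that by auto
  show "\<forall>\<^sub>F s in sequentially. 0 \<le> V s"
    using bounds by (intro eventually_sequentiallyI[of 2]) auto
  show "\<forall>\<^sub>F s in sequentially. V s \<le> 4 * real M * exp 1 / real s"
    using bounds by (intro eventually_sequentiallyI[of 2]) auto
  show "(\<lambda>s. 4 * real M * exp 1 / real s) \<longlonglongrightarrow> 0" by (rule lim_const_over_n)
qed simp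

end
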